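(* Let $m\ge 2$, let $f:\mathbb{R}^n\to\mathbb{R}$ be convex, let $\mathbf{x}_0\in\mathbb{R}^n$ not be a minimizer of $f$, let $\lambda\ge 0$, let $\mathbf{z}\in\mathbb{R}^m$ be nonzero and set $\bar{\mathbf{z}}=\sqrt m\,\mathbf{z}$. Write $\delta=\delta(\lambda\partial f(\mathbf{x}_0))$, let $\gamma_m=\sqrt2\,\Gamma(\tfrac{m+1}{2})/\Gamma(\tfrac m2)$ (the expected Euclidean norm of a standard Gaussian vector in $\mathbb{R}^m$), and fix $0<t<\sqrt{m-1}-\sqrt{\delta}$. Define $$\ell(t)=2\|\mathbf{z}\|_2\,\frac{\sqrt{\delta}+t}{\sqrt{m-1}-\sqrt{\delta}-t}.$$ Suppose $\mathbf{g}\in\mathbb{R}^m$ and $\mathbf{h}\in\mathbb{R}^n$ satisfy: (1) $\|\mathbf{g}\|_2\ge\gamma_m-t/4$; (2) $\mathrm{dist}(\mathbf{h},\lambda\partial f(\mathbf{x}_0))\le\sqrt{\delta}+t/4$; (3) $\mathbf{g}^T\bar{\mathbf{z}}\le (t/4)\|\bar{\mathbf{z}}\|_2$. Then $$\mathcal{L}(t;\mathbf{g},\mathbf{h}):=\inf_{\alpha\ge\ell(t)}\Big\{\sqrt{\alpha^2\|\mathbf{g}\|_2^2+\|\bar{\mathbf{z}}\|_2^2-2\alpha\,\mathbf{g}^T\bar{\mathbf{z}}}-\alpha\,\mathrm{dist}(\mathbf{h},\lambda\partial f(\mathbf{x}_0))\Big\}>\|\bar{\mathbf{z}}\|_2.$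$
   Context: For a convex $f:\mathbb{R}^n\to\mathbb{R}$, the subdifferential at $\mathbf{x}_0$ is $\partial f(\mathbf{x}_0)=\{\mathbf{s}\in\mathbb{R}^n: f(\mathbf{x}_0+\mathbf{w})\ge f(\mathbf{x}_0)+\mathbf{s}^T\mathbf{w}\ \forall \mathbf{w}\in\mathbb{R}^n\}$, and for $\lambda\ge0$, $\lambda\partial f(\mathbf{x}_0)=\{\lambda\mathbf{s}:\mathbf{s}\in\partial f(\mathbf{x}_0)\}$ (a nonempty, convex, compact set). For a nonempty closed convex set $\mathcal{C}\subset\mathbb{R}^n$, $\mathrm{dist}(\mathbf{v},\mathcal{C})=\min_{\mathbf{s}\in\mathcal{C}}\|\mathbf{v}-\mathbf{s}\|_2$, and the Gaussian squared distance is $\delta(\mathcal{C})=\mathbb{E}_{\mathbf{h}}[\mathrm{dist}^2(\mathbf{h},\mathcal{C})]$, where $\mathbf{h}\in\mathbb{R}^n$ has i.i.d. $\mathcal{N}(0,1)$ entries. *)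

theory Defs
  imports "HOL-Analysis.Analysis"
begin

definition subdiff :: "('a::real_inner \<Rightarrow> real) \<Rightarrow> 'a \<Rightarrow> 'a set" where
  "subdiff f x0 = {s. \<forall>w. f (x0 + w) \<ge> f x0 + s \<bullet> w}"

definition scaled_subdiff :: "real \<Rightarrow> ('a::real_inner \<Rightarrow> real) \<Rightarrow> 'a \<Rightarrow> 'a set" where
  "scaled_subdiff lam f x0 = (\<lambda>s. lam *\<^sub>R s) ` subdiff f x0"

definition gauss_density :: "'a::euclidean_space \<Rightarrow> real" where
  "gauss_density h = (2 * pi) powr (- real DIM('a) / 2) * exp (- (norm h)\<^sup>2 / 2)"

definition gauss_sq_dist :: "'a::euclidean_space set \<Rightarrow> real" where
  "gauss_sq_dist C = (\<integral>h. (infdist h C)\<^sup>2 * gauss_density h \<partial>lborel)"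

definition gamma_m :: "nat \<Rightarrow> real" where
  "gamma_m m = sqrt 2 * Gamma ((real m + 1) / 2) / Gamma (real m / 2)"

end

theory Submission
  imports Defs "HOL-Real_Asymp.Real_Asymp"
begin

text \<open>
  Let \<open>G = \<parallel>g\<parallel>\<close>, \<open>D = dist(h, \<lambda>\<partial>f(x\<^sub>0))\<close>, \<open>Z = \<surd>m \<parallel>z\<parallel>\<close> and \<open>p = \<surd>m g\<^sup>Tz\<close>. Then
  \<open>\<alpha>\<^sup>2G\<^sup>2 + Z\<^sup>2 - 2\<alpha>p = (Z + \<alpha>D)\<^sup>2 + \<alpha>(\<alpha>(G\<^sup>2 - D\<^sup>2) - 2p - 2ZD)\<close>, so the infimum exceeds \<open>Z\<close>
  as soon as \<open>G > D\<close> and \<open>\<ell>(G\<^sup>2 - D\<^sup>2) > 2p + 2ZD\<close>. Both follow from the three hypotheses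
  by elementary estimates once \<open>\<gamma>\<^sub>m\<^sup>2 \<ge> m - 1/2 \<ge> \<surd>(m(m - 1))\<close> is known.
  That Gamma bound is Kershaw's \<open>\<Gamma>(x + 1/2)/\<Gamma>(x) \<ge> \<surd>(x - 1/4)\<close>: log-convexity of \<open>\<Gamma>\<close> gives the
  weaker \<open>(\<Gamma>(x + 1/2)/\<Gamma>(x))\<^sup>2 \<ge> x\<^sup>2/(x + 1/2)\<close>, and since \<open>(\<Gamma>(x + 1/2)/\<Gamma>(x))\<^sup>2/(x - 1/4)\<close>
  decreases under \<open>x \<mapsto> x + 1\<close>, applying the weak bound at \<open>x + k\<close> for \<open>k \<rightarrow> \<infinity>\<close> sharpens it.
\<close>

definition Gamma_half_ratio :: "real \<Rightarrow> real" where
  "Gamma_half_ratio x = Gamma (x + 1/2) / Gamma x"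

lemma Gamma_real_plus1: "x > 0 \<Longrightarrow> Gamma (x + 1) = x * Gamma (x :: real)"
  by (rule Gamma_plus1) (auto simp: nonpos_Ints_def)

lemma Gamma_half_ratio_pos: "x > 0 \<Longrightarrow> Gamma_half_ratio x > 0"
  by (simp add: Gamma_half_ratio_def)

lemma Gamma_half_ratio_plus1:
  assumes "x > 0"
  shows "Gamma_half_ratio (x + 1) = (x + 1/2) / x * Gamma_half_ratio x"
proof -
  have "Gamma (x + 1 + 1/2) = (x + 1/2) * Gamma (x + 1/2)"
    using Gamma_real_plus1[of "x + 1/2"] assms by (simp add: algebra_simps)
  then show ?thesis
    using assms by (simp add: Gamma_half_ratio_def Gamma_real_plus1)
qed

lemma Gamma_half_ratio_sq_ge:
  assumes x: "x > 0"
  shows "x\<^sup>2 / (x + 1/2) \<le> (Gamma_half_ratio x)\<^sup>2"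
proof -
  have "ln (Gamma (x + 1)) \<le> (ln (Gamma (x + 1/2)) + ln (Gamma (x + 3/2))) / 2"
    using convex_onD[OF log_convex_Gamma_real, of "1/2" "x + 1/2" "x + 3/2"] x
    by (simp add: algebra_simps)
  then have "exp (2 * ln (Gamma (x + 1))) \<le> exp (ln (Gamma (x + 1/2)) + ln (Gamma (x + 3/2)))"
    by simp
  moreover have "exp (2 * ln (Gamma (x + 1))) = (Gamma (x + 1))\<^sup>2"
    using Gamma_real_pos[of "x + 1"] x by (simp add: exp_of_nat_mult[of 2, simplified])
  ultimately have "(Gamma (x + 1))\<^sup>2 \<le> Gamma (x + 1/2) * Gamma (x + 3/2)"
    using x by (simp add: exp_add)
  moreover have "Gamma (x + 3/2) = (x + 1/2) * Gamma (x + 1/2)"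
    using Gamma_real_plus1[of "x + 1/2"] x by (simp add: algebra_simps)
  moreover have "Gamma (x + 1) = x * Gamma x"
    using x by (rule Gamma_real_plus1)
  ultimately have "(x * Gamma x)\<^sup>2 \<le> (x + 1/2) * (Gamma (x + 1/2))\<^sup>2"
    by (simp add: power2_eq_square mult_ac)
  then show ?thesis
    using x Gamma_real_pos[OF x, THEN less_imp_neq, symmetric]
    by (simp add: Gamma_half_ratio_def power_divide power_mult_distrib divide_simps mult_ac)
qed

lemma Gamma_half_ratio_quotient_decreasing:
  assumes x: "x > 1/4"
  shows "(Gamma_half_ratio (x + 1))\<^sup>2 / (x + 3/4) \<le> (Gamma_half_ratio x)\<^sup>2 / (x - 1/4)"
proof -
  have "(x + 1/2)\<^sup>2 * (x - 1/4) \<le> x\<^sup>2 * (x + 3/4)"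
    by (simp add: power2_eq_square algebra_simps)
  then have "((x + 1/2) / x)\<^sup>2 / (x + 3/4) \<le> 1 / (x - 1/4)"
    using x by (simp add: power_divide divide_simps) (simp add: mult_ac)
  moreover have "(Gamma_half_ratio (x + 1))\<^sup>2 = ((x + 1/2) / x)\<^sup>2 * (Gamma_half_ratio x)\<^sup>2"
    using x by (simp only: Gamma_half_ratio_plus1 power_mult_distrib)
  moreover note mult_right_mono[OF calculation(1) zero_le_power2[of "Gamma_half_ratio x"]]
  ultimately show ?thesis
    by simp
qed

theorem Gamma_half_ratio_ge:
  assumes x: "x > 1/4"
  shows "sqrt (x - 1/4) \<le> Gamma_half_ratio x"
proof -
  define q where "q y = (Gamma_half_ratio y)\<^sup>2 / (y - 1/4)" for y
  have q_shift: "q (x + real k) \<le> q x" for k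
  proof (induction k)
    case (Suc k)
    have "q (x + real k + 1) \<le> q (x + real k)"
      using Gamma_half_ratio_quotient_decreasing[of "x + real k"] x
      by (simp add: q_def algebra_simps)
    with Suc show ?case by (simp add: algebra_simps)
  qed simp
  have q_lower: "y\<^sup>2 / ((y + 1/2) * (y - 1/4)) \<le> q y" if "y > 1/4" for y
    using divide_right_mono[OF Gamma_half_ratio_sq_ge, of y "y - 1/4"] that
    by (simp add: q_def)
  have "(\<lambda>k. (x + real k)\<^sup>2 / ((x + real k + 1/2) * (x + real k - 1/4))) \<longlonglongrightarrow> 1"
    by real_asymp
  moreover have "(x + real k)\<^sup>2 / ((x + real k + 1/2) * (x + real k - 1/4)) \<le> q x" for k
    using q_lower[of "x + real k"] q_shift[of k] x by simp
  ultimately have "1 \<le> q x"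
    by (intro LIMSEQ_le_const2) auto
  then have "x - 1/4 \<le> (Gamma_half_ratio x)\<^sup>2"
    using x by (simp add: q_def le_divide_eq)
  then have "sqrt (x - 1/4) \<le> sqrt ((Gamma_half_ratio x)\<^sup>2)"
    by (rule real_sqrt_le_mono)
  then show ?thesis
    using Gamma_half_ratio_pos[of x] x by simp
qed

lemma gamma_m_eq: "gamma_m m = sqrt 2 * Gamma_half_ratio (real m / 2)"
  by (simp add: gamma_m_def Gamma_half_ratio_def add_divide_distrib)

lemma gamma_m_ge:
  assumes "m \<ge> 1"
  shows "sqrt (real m - 1/2) \<le> gamma_m m"
proof -
  have "sqrt (real m / 2 - 1/4) \<le> Gamma_half_ratio (real m / 2)"
    using assms by (intro Gamma_half_ratio_ge) auto
  then have "sqrt 2 * sqrt (real m / 2 - 1/4) \<le> gamma_m m"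
    by (simp add: gamma_m_eq)
  then show ?thesis
    by (simp add: real_sqrt_mult[symmetric] algebra_simps)
qed

lemma sqrt_mult_pred_le:
  fixes M :: real
  assumes "1 \<le> M"
  shows "sqrt M * sqrt (M - 1) \<le> M - 1/2"
proof -
  have "M * (M - 1) \<le> (M - 1/2)\<^sup>2"
    by (simp add: power2_eq_square algebra_simps)
  then have "sqrt (M * (M - 1)) \<le> sqrt ((M - 1/2)\<^sup>2)"
    by (rule real_sqrt_le_mono)
  then show ?thesis
    using assms by (simp add: real_sqrt_mult)
qed

text \<open>
  With \<open>r = \<surd>M\<close>, \<open>a = \<surd>(M - 1)\<close>, \<open>g\<^sub>0 = \<surd>(M - 1/2)\<close>, the difference of the two sides is
  \<open>2(s + t)(g\<^sub>0\<^sup>2 - ra) + rat + (s + t)(s(2r - 2s - t) + t(r - g\<^sub>0))\<close>, and every summand is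
  nonnegative, the second one positive.
\<close>
lemma threshold_estimate:
  fixes M s t :: real
  assumes M: "1 \<le> M" and s: "0 \<le> s" and t: "0 < t" "t < sqrt (M - 1) - s"
  shows "sqrt M * (2 * s + t) * (sqrt (M - 1) - s - t)
           < 2 * (s + t) * ((sqrt (M - 1/2) - t/4)\<^sup>2 - (s + t/4)\<^sup>2)"
proof -
  define r a g0 where "r = sqrt M" and "a = sqrt (M - 1)" and "g0 = sqrt (M - 1/2)"
  have "a \<le> g0" "g0 \<le> r"
    by (simp_all add: a_def g0_def r_def)
  have "0 < a"
    unfolding a_def using s t by linarith
  have g0_sq: "g0\<^sup>2 = M - 1/2"
    using M by (simp add: g0_def)
  have "r * a \<le> g0\<^sup>2"
    using sqrt_mult_pred_le[OF M] g0_sq by (simp add: r_def a_def)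
  then have "2 * (s + t) * (r * a) \<le> 2 * (s + t) * g0\<^sup>2"
    using s t by (intro mult_left_mono) auto
  moreover have "0 < r * a * t"
    using \<open>0 < a\<close> \<open>a \<le> g0\<close> \<open>g0 \<le> r\<close> t by simp
  moreover have "0 \<le> (s + t) * (s * (2 * r - 2 * s - t) + t * (r - g0))"
    using s t \<open>a \<le> g0\<close> \<open>g0 \<le> r\<close> by (intro mult_nonneg_nonneg add_nonneg_nonneg)
      (auto simp: a_def)
  ultimately have "r * (2 * s + t) * (a - s - t) < 2 * (s + t) * ((g0 - t/4)\<^sup>2 - (s + t/4)\<^sup>2)"
    by (simp add: power2_eq_square algebra_simps)
  then show ?thesis
    by (simp add: r_def a_def g0_def)
qed

lemma threshold_bound:
  fixes M s t w G D p :: real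
  assumes M: "1 \<le> M" and s: "0 \<le> s" and t: "0 < t" "t < sqrt (M - 1) - s" and w: "0 < w"
    and G: "sqrt (M - 1/2) - t/4 \<le> G" and D: "0 \<le> D" "D \<le> s + t/4"
    and p: "p \<le> t/4 * (sqrt M * w)"
  shows "D < G"
    and "2 * p + 2 * (sqrt M * w) * D < 2 * w * (s + t) / (sqrt (M - 1) - s - t) * (G\<^sup>2 - D\<^sup>2)"
proof -
  define K where "K = sqrt (M - 1) - s - t"
  define Q where "Q = (sqrt (M - 1/2) - t/4)\<^sup>2 - (s + t/4)\<^sup>2"
  have "0 < K"
    using t by (simp add: K_def)
  have "sqrt (M - 1) \<le> sqrt (M - 1/2)"
    by simp
  then have below_G: "s + t/4 < sqrt (M - 1/2) - t/4"
    using t by linarith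
  then show "D < G"
    using G D by linarith
  have "D\<^sup>2 \<le> (s + t/4)\<^sup>2" and "(sqrt (M - 1/2) - t/4)\<^sup>2 \<le> G\<^sup>2"
    using D G below_G s t by (auto intro!: power_mono)
  then have "Q \<le> G\<^sup>2 - D\<^sup>2"
    by (simp add: Q_def)
  have "0 \<le> 2 * (sqrt M * w)"
    using M w by simp
  from mult_left_mono[OF D(2) this]
  have "2 * p + 2 * (sqrt M * w) * D \<le> sqrt M * w * (2 * s + t)"
    using p by (simp add: algebra_simps)
  also have "\<dots> < 2 * w * (s + t) / K * Q"
  proof -
    have "w * (sqrt M * (2 * s + t) * K) < w * (2 * (s + t) * Q)"
      using threshold_estimate[OF M s t] w by (simp add: K_def Q_def)
    then show ?thesis
      using \<open>0 < K\<close> by (simp add: field_simps)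
  qed
  also have "\<dots> \<le> 2 * w * (s + t) / K * (G\<^sup>2 - D\<^sup>2)"
    using \<open>Q \<le> G\<^sup>2 - D\<^sup>2\<close> w s t \<open>0 < K\<close> by (intro mult_left_mono) auto
  finally show "2 * p + 2 * (sqrt M * w) * D < 2 * w * (s + t) / (sqrt (M - 1) - s - t) * (G\<^sup>2 - D\<^sup>2)"
    by (simp add: K_def)
qed

text \<open>
  The radicand exceeds \<open>(Z + \<alpha>D)\<^sup>2\<close> by at least \<open>\<alpha>e\<close>, which grows linearly in \<open>\<alpha>\<close>;
  hence it also exceeds \<open>(Z + \<alpha>D + c)\<^sup>2\<close> for one small \<open>c > 0\<close> independent of \<open>\<alpha>\<close>.
\<close>
lemma INF_sqrt_quadratic_minus_linear_gt:
  fixes l G D Z p :: real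
  assumes l: "0 < l" and GD: "D < G" and D: "0 \<le> D" and Z: "0 \<le> Z"
    and gap: "2 * p + 2 * Z * D < l * (G\<^sup>2 - D\<^sup>2)"
  shows "ereal Z < (INF \<alpha>\<in>{l..}. ereal (sqrt (\<alpha>\<^sup>2 * G\<^sup>2 + Z\<^sup>2 - 2 * \<alpha> * p) - \<alpha> * D))"
proof -
  define e where "e = l * (G\<^sup>2 - D\<^sup>2) - 2 * p - 2 * Z * D"
  define c where "c = min 1 (min (e / (4 * D + 4)) (l * e / (4 * Z + 2)))"
  have "0 < e"
    using gap by (simp add: e_def)
  then have "0 < c"
    using l D Z by (simp add: c_def)
  have c_le: "c \<le> 1" "c \<le> e / (4 * D + 4)" "c \<le> l * e / (4 * Z + 2)"
    by (simp_all add: c_def)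
  have "D\<^sup>2 < G\<^sup>2"
    using GD D by (intro power_strict_mono) auto
  have margin: "Z + c \<le> sqrt (\<alpha>\<^sup>2 * G\<^sup>2 + Z\<^sup>2 - 2 * \<alpha> * p) - \<alpha> * D" if "l \<le> \<alpha>" for \<alpha>
  proof -
    have "0 < \<alpha>"
      using that l by simp
    have "l * (G\<^sup>2 - D\<^sup>2) \<le> \<alpha> * (G\<^sup>2 - D\<^sup>2)"
      using that \<open>D\<^sup>2 < G\<^sup>2\<close> by (intro mult_right_mono) auto
    then have "\<alpha> * e \<le> \<alpha> * (\<alpha> * (G\<^sup>2 - D\<^sup>2) - 2 * p - 2 * Z * D)"
      using \<open>0 < \<alpha>\<close> by (intro mult_left_mono) (auto simp: e_def)
    moreover have "c * (4 * D + 4) \<le> e"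
      using c_le(2) D by (simp add: pos_le_divide_eq)
    then have "2 * c * \<alpha> * D \<le> \<alpha> * e / 2"
      using \<open>0 < \<alpha>\<close> \<open>0 < c\<close> mult_left_mono[of "2 * c * D" "e / 2" \<alpha>] by (simp add: algebra_simps)
    moreover have "c\<^sup>2 \<le> c"
      using \<open>0 < c\<close> c_le(1) by (simp add: power2_eq_square mult_left_le)
    moreover have "c * (4 * Z + 2) \<le> l * e"
      using c_le(3) Z by (simp add: pos_le_divide_eq)
    moreover have "l * e \<le> \<alpha> * e"
      using that \<open>0 < e\<close> by (intro mult_right_mono) auto
    ultimately have "(Z + \<alpha> * D + c)\<^sup>2 \<le> \<alpha>\<^sup>2 * G\<^sup>2 + Z\<^sup>2 - 2 * \<alpha> * p"
      by (simp add: power2_eq_square algebra_simps)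
    then have "sqrt ((Z + \<alpha> * D + c)\<^sup>2) \<le> sqrt (\<alpha>\<^sup>2 * G\<^sup>2 + Z\<^sup>2 - 2 * \<alpha> * p)"
      by (rule real_sqrt_le_mono)
    then show ?thesis
      using Z D \<open>0 < \<alpha>\<close> \<open>0 < c\<close> by simp
  qed
  have "ereal Z < ereal (Z + c)"
    using \<open>0 < c\<close> by simp
  also have "\<dots> \<le> (INF \<alpha>\<in>{l..}. ereal (sqrt (\<alpha>\<^sup>2 * G\<^sup>2 + Z\<^sup>2 - 2 * \<alpha> * p) - \<alpha> * D))"
    using margin by (intro INF_greatest) auto
  finally show ?thesis .
qed

lemma gauss_sq_dist_nonneg: "0 \<le> gauss_sq_dist C"
  unfolding gauss_sq_dist_def gauss_density_def by (intro integral_nonneg_AE AE_I2) simp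

text \<open>
  Only the three numerical bounds on \<open>g\<close> and \<open>h\<close> enter.
\<close>
theorem lemma4:
  fixes f :: "real ^ 'n \<Rightarrow> real" and x0 h :: "real ^ 'n"
    and z g :: "real ^ 'm" and lam t :: real
  assumes m2: "CARD('m) \<ge> 2"
    and cvx: "convex_on UNIV f"
    and notmin: "\<exists>x. f x < f x0"
    and lam: "lam \<ge> 0"
    and z: "z \<noteq> 0"
    and t: "0 < t" "t < sqrt (real CARD('m) - 1) - sqrt (gauss_sq_dist (scaled_subdiff lam f x0))"
    and g1: "norm g \<ge> gamma_m CARD('m) - t / 4"
    and h2: "infdist h (scaled_subdiff lam f x0) \<le> sqrt (gauss_sq_dist (scaled_subdiff lam f x0)) + t / 4"
    and g3: "g \<bullet> (sqrt (real CARD('m)) *\<^sub>R z) \<le> (t / 4) * norm (sqrt (real CARD('m)) *\<^sub>R z)"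
  shows "(let zb = sqrt (real CARD('m)) *\<^sub>R z;
              dl = gauss_sq_dist (scaled_subdiff lam f x0);
              ell = 2 * norm z * (sqrt dl + t) / (sqrt (real CARD('m) - 1) - sqrt dl - t)
          in (INF \<alpha>\<in>{ell..}. ereal (sqrt (\<alpha>\<^sup>2 * (norm g)\<^sup>2 + (norm zb)\<^sup>2 - 2 * \<alpha> * (g \<bullet> zb))
                     - \<alpha> * infdist h (scaled_subdiff lam f x0))) > ereal (norm zb))"
proof -
  define M C where "M = real CARD('m)" and "C = scaled_subdiff lam f x0"
  define s D zb where "s = sqrt (gauss_sq_dist C)" and "D = infdist h C"
    and "zb = sqrt M *\<^sub>R z"
  have M: "1 \<le> M"
    using m2 by (simp add: M_def)
  have s: "0 \<le> s"
    by (simp add: s_def gauss_sq_dist_nonneg)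
  have norm_zb: "norm zb = sqrt M * norm z"
    using M by (simp add: zb_def)
  have "sqrt (M - 1/2) \<le> gamma_m CARD('m)"
    using gamma_m_ge[of "CARD('m)"] m2 by (simp add: M_def)
  with g1 have G: "sqrt (M - 1/2) - t/4 \<le> norm g"
    by simp
  have p: "g \<bullet> zb \<le> t/4 * (sqrt M * norm z)"
    using g3 norm_zb by (simp add: zb_def M_def)
  have t': "0 < t" "t < sqrt (M - 1) - s"
    using t by (simp_all add: M_def s_def C_def)
  have D: "0 \<le> D" "D \<le> s + t/4"
    using h2 by (simp_all add: D_def s_def C_def infdist_nonneg)
  have w: "0 < norm z"
    using z by simp
  note bound = threshold_bound[OF M s t' w G D p]
  have "ereal (norm zb) < (INF \<alpha>\<in>{2 * norm z * (s + t) / (sqrt (M - 1) - s - t)..}.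
      ereal (sqrt (\<alpha>\<^sup>2 * (norm g)\<^sup>2 + (norm zb)\<^sup>2 - 2 * \<alpha> * (g \<bullet> zb)) - \<alpha> * D))"
    using M s t' w D bound norm_zb by (intro INF_sqrt_quadratic_minus_linear_gt divide_pos_pos) auto
  then show ?thesis
    by (simp add: Let_def zb_def D_def C_def s_def M_def)
qed

end
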